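(* There is $c>0$ such that for every integer $n\ge2$, every integer $m$ with $|2m-n|\le1$, and all $z,w$ with $|z|,|w|\le cn$, $z\in L_n$ and $w+\frac mn z\in L_m$, $$\mathbb{P}\Big\{S_m=\frac mn z+w\,\Big|\,S_n=z\Big\}=2\sqrt{\frac{1}{2\pi(m-m^2/n)(1-(z/n)^2)}}\;\exp\Big\{-\frac{w^2}{2(m-m^2/n)(1-(z/n)^2)}+O\Big(\frac1n+\frac{w^4}{n^3}\Big)\Big\},$$ where the $O(\cdot)$ term is bounded in absolute value by a universal constant times $\frac1n+\frac{w^4}{n^3}$.
   Context: $S_n$ is simple random walk on $\mathbb{Z}$ started at $0$, with i.i.d. steps equal to $\pm1$ with probability $1/2$ each; $L_n=\{z\in\mathbb{Z}:\mathbb{P}\{S_n=z\}>0\}$. *)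

theory Defs
  imports "HOL-Probability.Probability"
begin

text \<open>Simple random walk on the integers: the first N steps are a uniformly random
  sequence in {-1,1}^N (equivalently i.i.d. fair +-1 steps).\<close>
definition srw_steps :: "nat \<Rightarrow> int list pmf" where
  "srw_steps N = pmf_of_set {xs. length xs = N \<and> set xs \<subseteq> {-1, 1}}"

definition walk_pos :: "nat \<Rightarrow> int list \<Rightarrow> int" where
  "walk_pos k xs = sum_list (take k xs)"

definition srw_prob :: "nat \<Rightarrow> int \<Rightarrow> real" where
  "srw_prob n z = measure_pmf.prob (srw_steps n) {xs. walk_pos n xs = z}"

definition L :: "nat \<Rightarrow> int set" where
  "L n = {z. srw_prob n z > 0}"

definition srw_cond_prob :: "nat \<Rightarrow> real \<Rightarrow> nat \<Rightarrow> int \<Rightarrow> real" where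
  "srw_cond_prob m a n z =
     measure_pmf.prob (srw_steps n) {xs. real_of_int (walk_pos m xs) = a \<and> walk_pos n xs = z}
     / measure_pmf.prob (srw_steps n) {xs. walk_pos n xs = z}"

end

theory Submission
  imports Defs
begin

(* Given S_n = z = 2K - n, the first n steps are uniform among the sign sequences with K up-steps,
   so for S_m = 2a - m the conditional probability is the hypergeometric ratio
   C(m, a) C(n - m, K - a) / C(n, K).  Stirling's formula ln N! = f N + ln (2 pi) / 2 + O(1/N),
   with f x = (x + 1/2) ln x - x and the constant identified through Wallis' product, turns its
   logarithm into a combination of f at the margins m, n - m, K, n - K and at the four cells
   a, m - a, K - a, n - m - K + a of the corresponding 2x2 table.  The cells are the values
   r c / n for independent margins, shifted by +-w/2.  Expanding f to third order around them, the
   (1/2) ln terms produce the Gaussian prefactor, the terms (w/2) ln (r c / n) cancel, the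
   quadratic terms add up to -w^2/(2 sigma), and the cubic ones are O(|w|^3/n^3) because m is
   within 1/2 of n/2; the remainders are O(1/n + w^4/n^3). *)

lemma DERIV2_nonneg_imp_nonneg:
  fixes F F' F'' :: "real \<Rightarrow> real"
  assumes "lo \<le> 0" "0 \<le> hi" "lo \<le> s" "s \<le> hi"
    and "\<And>x. lo \<le> x \<Longrightarrow> x \<le> hi \<Longrightarrow> (F has_real_derivative F' x) (at x)"
    and "\<And>x. lo \<le> x \<Longrightarrow> x \<le> hi \<Longrightarrow> (F' has_real_derivative F'' x) (at x)"
    and "\<And>x. lo \<le> x \<Longrightarrow> x \<le> hi \<Longrightarrow> F'' x \<ge> 0"
    and "F 0 = 0" "F' 0 = 0"
  shows "F s \<ge> 0"
proof (cases "s \<ge> 0")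
  case True
  have "F 0 \<le> F s"
  proof (rule DERIV_nonneg_imp_nondecreasing[OF True])
    fix x assume x: "0 \<le> x" "x \<le> s"
    have "F' 0 \<le> F' x"
      by (rule DERIV_nonneg_imp_nondecreasing[OF x(1)]) (use x assms in \<open>metis order.trans\<close>)
    then show "\<exists>y. (F has_real_derivative y) (at x) \<and> 0 \<le> y"
      using x assms by (intro exI[of _ "F' x"]) auto
  qed
  then show ?thesis using \<open>F 0 = 0\<close> by simp
next
  case False
  have "F 0 \<le> F s"
  proof (rule DERIV_nonpos_imp_nonincreasing[of s 0 F])
    show "s \<le> 0" using False by simp
    fix x assume x: "s \<le> x" "x \<le> 0"
    have "F' x \<le> F' 0"
      by (rule DERIV_nonneg_imp_nondecreasing[OF x(2)]) (use x assms in \<open>metis order.trans\<close>)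
    then show "\<exists>y. (F has_real_derivative y) (at x) \<and> y \<le> 0"
      using x assms by (intro exI[of _ "F' x"]) auto
  qed
  then show ?thesis using \<open>F 0 = 0\<close> by simp
qed

lemma ln_one_plus_x_lower_quadratic:
  fixes x :: real
  assumes "0 \<le> x"
  shows "x - x\<^sup>2 / 2 \<le> ln (1 + x)"
proof -
  have "0 \<le> ln (1 + x) - x + x\<^sup>2 / 2"
  proof (rule DERIV2_nonneg_imp_nonneg[of 0 x x _ _ "\<lambda>x. 1 - 1 / (1 + x)\<^sup>2"])
    fix y :: real assume y: "0 \<le> y" "y \<le> x"
    show "((\<lambda>y. ln (1 + y) - y + y\<^sup>2 / 2) has_real_derivative 1 / (1 + y) - 1 + y) (at y)"
      "((\<lambda>y. 1 / (1 + y) - 1 + y) has_real_derivative 1 - 1 / (1 + y)\<^sup>2) (at y)"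
      using y by (auto intro!: derivative_eq_intros simp: field_simps power2_eq_square)
    have "1 \<le> (1 + y)\<^sup>2" using y by (intro one_le_power) simp
    then show "0 \<le> 1 - 1 / (1 + y)\<^sup>2" by (simp add: divide_le_eq)
  qed (use assms in auto)
  then show ?thesis by simp
qed

lemma ln_one_plus_x_upper_cubic:
  fixes x :: real
  assumes "0 \<le> x"
  shows "ln (1 + x) \<le> x - x\<^sup>2 / 2 + x ^ 3 / 3"
proof -
  have "0 \<le> x - x\<^sup>2 / 2 + x ^ 3 / 3 - ln (1 + x)"
  proof (rule DERIV2_nonneg_imp_nonneg[of 0 x x _ _ "\<lambda>x. 2 * x - 1 + 1 / (1 + x)\<^sup>2"])
    fix y :: real assume y: "0 \<le> y" "y \<le> x"
    show "((\<lambda>y. y - y\<^sup>2 / 2 + y ^ 3 / 3 - ln (1 + y))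
        has_real_derivative 1 - y + y\<^sup>2 - 1 / (1 + y)) (at y)"
      "((\<lambda>y. 1 - y + y\<^sup>2 - 1 / (1 + y)) has_real_derivative 2 * y - 1 + 1 / (1 + y)\<^sup>2) (at y)"
      using y by (auto intro!: derivative_eq_intros simp: field_simps power2_eq_square)
    have "0 \<le> (2 * y - 1) * (1 + y)\<^sup>2 + 1"
      using y by (simp add: power2_eq_square algebra_simps)
    then show "0 \<le> 2 * y - 1 + 1 / (1 + y)\<^sup>2"
      using y by (simp add: field_simps)
  qed (use assms in auto)
  then show ?thesis by simp
qed

lemma one_plus_x_ln_one_plus_x_taylor_bounds:
  fixes s :: real
  assumes "\<bar>s\<bar> \<le> 1/2"
  shows "0 \<le> (1 + s) * ln (1 + s) - s - s\<^sup>2 / 2 + s ^ 3 / 6"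
    and "(1 + s) * ln (1 + s) - s - s\<^sup>2 / 2 + s ^ 3 / 6 \<le> s ^ 4 / 6"
proof -
  \<comment> \<open>the form in which field_simps meets the denominator (1 + x)^2\<close>
  have square_nz: "1 + (x * x + x * 2) \<noteq> 0" if "-1/2 \<le> x" for x :: real
  proof -
    have "1 + (x * x + x * 2) = (1 + x)\<^sup>2" by (simp add: power2_eq_square algebra_simps)
    then show ?thesis using that by simp
  qed
  have D: "((\<lambda>x. (1 + x) * ln (1 + x) - x - x\<^sup>2 / 2 + x ^ 3 / 6)
        has_real_derivative ln (1 + x) - x + x\<^sup>2 / 2) (at x)"
    and D': "((\<lambda>x. ln (1 + x) - x + x\<^sup>2 / 2) has_real_derivative x\<^sup>2 / (1 + x)) (at x)"
    if "-1/2 \<le> x" "x \<le> 1/2" for x :: real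
    using that square_nz[OF that(1)]
    by (auto intro!: derivative_eq_intros simp: field_simps power2_eq_square)
  show "0 \<le> (1 + s) * ln (1 + s) - s - s\<^sup>2 / 2 + s ^ 3 / 6"
    by (rule DERIV2_nonneg_imp_nonneg[of "-1/2" "1/2", OF _ _ _ _ D D']) (use assms in auto)
  have "0 \<le> s ^ 4 / 6 - ((1 + s) * ln (1 + s) - s - s\<^sup>2 / 2 + s ^ 3 / 6)"
  proof (rule DERIV2_nonneg_imp_nonneg[of "-1/2" "1/2" s _ _ "\<lambda>x. 2 * x\<^sup>2 - x\<^sup>2 / (1 + x)"])
    fix x :: real assume x: "-1/2 \<le> x" "x \<le> 1/2"
    show "((\<lambda>x. x ^ 4 / 6 - ((1 + x) * ln (1 + x) - x - x\<^sup>2 / 2 + x ^ 3 / 6))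
        has_real_derivative 2 * x ^ 3 / 3 - (ln (1 + x) - x + x\<^sup>2 / 2)) (at x)"
      "((\<lambda>x. 2 * x ^ 3 / 3 - (ln (1 + x) - x + x\<^sup>2 / 2))
        has_real_derivative 2 * x\<^sup>2 - x\<^sup>2 / (1 + x)) (at x)"
      using x square_nz[OF x(1)]
      by (auto intro!: derivative_eq_intros simp: field_simps power2_eq_square)
    have "x\<^sup>2 / (1 + x) \<le> x\<^sup>2 / (1/2)" using x by (intro divide_left_mono) auto
    then show "0 \<le> 2 * x\<^sup>2 - x\<^sup>2 / (1 + x)" by simp
  qed (use assms in auto)
  then show "(1 + s) * ln (1 + s) - s - s\<^sup>2 / 2 + s ^ 3 / 6 \<le> s ^ 4 / 6" by simp
qed

definition stirling_main :: "real \<Rightarrow> real" where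
  "stirling_main x = (x + 1/2) * ln x - x"

definition stirling_rem :: "nat \<Rightarrow> real" where
  "stirling_rem N = ln (fact N) - stirling_main (real N)"

lemma stirling_rem_step:
  assumes "N \<ge> 1"
  shows "\<bar>stirling_rem N - stirling_rem (Suc N)\<bar> \<le> 1 / (2 * real N) - 1 / (2 * real (Suc N))"
proof -
  define x where "x = 1 / real N"
  have N: "real N > 0" using assms by simp
  have x: "x \<ge> 0" unfolding x_def by simp
  have "ln (fact (Suc N)) = ln (real N + 1) + ln (fact N)"
    by (simp add: ln_mult add.commute)
  moreover have "real N + 1 = real N * (1 + x)"
    unfolding x_def using N by (simp add: field_simps)
  then have "ln (real N + 1) = ln (real N) + ln (1 + x)"
    using N x by (simp add: ln_mult)
  ultimately have "stirling_rem N - stirling_rem (Suc N) = (real N + 1/2) * ln (1 + x) - 1"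
    by (simp add: stirling_rem_def stirling_main_def algebra_simps)
  moreover have "(real N + 1/2) * (x - x\<^sup>2 / 2) - 1 = - 1 / (4 * real N ^ 2)"
    and "(real N + 1/2) * (x - x\<^sup>2 / 2 + x ^ 3 / 3) - 1 = 1 / (12 * real N ^ 2) + 1 / (6 * real N ^ 3)"
    unfolding x_def using N by (simp_all add: field_simps power2_eq_square power3_eq_cube)
  moreover have "(real N + 1/2) * (x - x\<^sup>2 / 2) \<le> (real N + 1/2) * ln (1 + x)"
    and "(real N + 1/2) * ln (1 + x) \<le> (real N + 1/2) * (x - x\<^sup>2 / 2 + x ^ 3 / 3)"
    using ln_one_plus_x_lower_quadratic[OF x] ln_one_plus_x_upper_cubic[OF x]
    by (simp_all add: mult_left_mono)
  moreover have "1 / (6 * real N ^ 3) \<le> 1 / (6 * real N ^ 2)"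
    using assms by (intro divide_left_mono mult_left_mono power_increasing) auto
  moreover have "1 / (4 * real N ^ 2) \<le> 1 / (2 * real N * (real N + 1))"
    using assms by (intro divide_left_mono) (auto simp: power2_eq_square)
  moreover have "1 / (2 * real N) - 1 / (2 * real (Suc N)) = 1 / (2 * real N * (real N + 1))"
    using N by (simp add: field_simps)
  ultimately show ?thesis by (simp only: abs_le_iff) linarith
qed

lemma stirling_rem_diff:
  assumes "1 \<le> N" "N \<le> M"
  shows "\<bar>stirling_rem N - stirling_rem M\<bar> \<le> 1 / (2 * real N) - 1 / (2 * real M)"
  using assms(2)
proof (induction M rule: dec_induct)
  case (step M)
  then show ?case using stirling_rem_step[of M] assms(1) by linarith
qed simp

lemma stirling_rem_diff_le:
  assumes "1 \<le> N" "N \<le> M"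
  shows "\<bar>stirling_rem N - stirling_rem M\<bar> \<le> 1 / (2 * real N)"
proof -
  have "0 \<le> 1 / (2 * real M)" by simp
  then show ?thesis using stirling_rem_diff[OF assms] by linarith
qed

lemma convergent_stirling_rem: "convergent stirling_rem"
proof (rule Cauchy_convergent, rule metric_CauchyI)
  fix e :: real assume "e > 0"
  then obtain M :: nat where M: "M > 0" "inverse (real M) < e"
    using ex_inverse_of_nat_less by blast
  have "dist (stirling_rem p) (stirling_rem q) < e" if "M \<le> p" "p \<le> q" for p q
  proof -
    have "\<bar>stirling_rem p - stirling_rem q\<bar> \<le> 1 / (2 * real p)"
      using stirling_rem_diff_le[of p q] that M by simp
    also have "\<dots> \<le> inverse (real M)"
      using that M by (simp add: field_simps)
    finally show ?thesis using M by (simp add: dist_real_def)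
  qed
  then show "\<exists>M. \<forall>p\<ge>M. \<forall>q\<ge>M. dist (stirling_rem p) (stirling_rem q) < e"
    by (metis dist_commute nle_le)
qed

lemma wallis_prod_fact:
  "(\<Prod>k=1..n. (4 * real k ^ 2) / (4 * real k ^ 2 - 1)) =
     2 ^ (4 * n) * fact n ^ 4 / (fact (2 * n) ^ 2 * (2 * real n + 1))"
proof (induction n)
  case (Suc n)
  define x where "x = real n"
  have x: "2 * x + 1 > 0" "2 * x + 3 > 0" "x + 1 > 0"
    unfolding x_def by linarith+
  have "(\<Prod>k=1..Suc n. (4 * real k ^ 2) / (4 * real k ^ 2 - 1))
      = 2 ^ (4 * n) * fact n ^ 4 / (fact (2 * n) ^ 2 * (2 * x + 1))
        * (4 * (x + 1)\<^sup>2 / ((2 * x + 1) * (2 * x + 3)))"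
  proof -
    have "4 * real (Suc n) ^ 2 / (4 * real (Suc n) ^ 2 - 1) = 4 * (x + 1)\<^sup>2 / ((2 * x + 1) * (2 * x + 3))"
      by (simp add: x_def algebra_simps power2_eq_square)
    then show ?thesis
      by (simp only: prod.nat_ivl_Suc'[of 1 n] Suc.IH mult.commute[of _ "4 * (x + 1)\<^sup>2 / _"])
        (simp add: x_def)
  qed
  also have "\<dots> = 16 * 2 ^ (4 * n) * ((x + 1) * fact n) ^ 4
      / (((2 * x + 2) * (2 * x + 1) * fact (2 * n))\<^sup>2 * (2 * (x + 1) + 1))"
    using x by (simp add: divide_simps) algebra
  also have "\<dots> = 2 ^ (4 * Suc n) * fact (Suc n) ^ 4 / (fact (2 * Suc n) ^ 2 * (2 * real (Suc n) + 1))"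
    by (simp add: x_def power_add algebra_simps)
  finally show ?case .
qed simp

lemma stirling_rem_limit: "stirling_rem \<longlonglongrightarrow> ln (2 * pi) / 2"
proof -
  obtain D where D: "stirling_rem \<longlonglongrightarrow> D"
    using convergent_stirling_rem by (auto simp: convergent_def)
  define W where "W n = (\<Prod>k=1..n. (4 * real k ^ 2) / (4 * real k ^ 2 - 1))" for n
  have "ln (W n) = 4 * stirling_rem n - 2 * stirling_rem (2 * n) - ln 2 - ln (2 + 1 / real n)"
    if "n \<ge> 1" for n
  proof -
    have n: "real n > 0" using that by simp
    have "ln (W n) = 4 * real n * ln 2 + 4 * ln (fact n) - 2 * ln (fact (2 * n)) - ln (2 * real n + 1)"
      unfolding W_def wallis_prod_fact using n
      by (simp add: ln_mult ln_div ln_realpow del: of_nat_mult)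
    moreover have "2 * real n + 1 = real n * (2 + 1 / real n)" "2 + 1 / real n > 0"
      using n by (simp_all add: field_simps add_pos_pos)
    then have "ln (2 * real n + 1) = ln (real n) + ln (2 + 1 / real n)"
      using n ln_mult[of "real n" "2 + 1 / real n"] by simp
    ultimately show ?thesis
      using n by (simp add: stirling_rem_def stirling_main_def ln_mult algebra_simps)
  qed
  then have "\<forall>\<^sub>F n in sequentially.
      4 * stirling_rem n - 2 * stirling_rem (2 * n) - ln 2 - ln (2 + 1 / real n) = ln (W n)"
    by (intro eventually_sequentiallyI[of 1]) simp
  moreover have "(\<lambda>n. stirling_rem (2 * n)) \<longlonglongrightarrow> D"
    using LIMSEQ_subseq_LIMSEQ[OF D, of "\<lambda>n. 2 * n"] by (simp add: strict_mono_def o_def)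
  then have "(\<lambda>n. 4 * stirling_rem n - 2 * stirling_rem (2 * n) - ln 2 - ln (2 + 1 / real n))
      \<longlonglongrightarrow> 4 * D - 2 * D - ln 2 - ln (2 + 0)"
    by (intro tendsto_intros D lim_inverse_n') auto
  ultimately have "(\<lambda>n. ln (W n)) \<longlonglongrightarrow> 4 * D - 2 * D - ln 2 - ln (2 + 0)"
    by (rule Lim_transform_eventually[rotated])
  moreover have "(\<lambda>n. ln (W n)) \<longlonglongrightarrow> ln (pi / 2)"
    unfolding W_def by (intro tendsto_ln wallis) simp
  ultimately have "ln (pi / 2) = 2 * D - 2 * ln 2"
    using LIMSEQ_unique by fastforce
  then show ?thesis
    using D by (simp add: ln_div ln_mult)
qed

theorem ln_fact_stirling:
  assumes "N \<ge> 1"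
  shows "\<bar>ln (fact N) - stirling_main (real N) - ln (2 * pi) / 2\<bar> \<le> 1 / (2 * real N)"
proof -
  have "(\<lambda>M. \<bar>stirling_rem N - stirling_rem M\<bar>) \<longlonglongrightarrow> \<bar>stirling_rem N - ln (2 * pi) / 2\<bar>"
    by (intro tendsto_intros stirling_rem_limit)
  then have "\<bar>stirling_rem N - ln (2 * pi) / 2\<bar> \<le> 1 / (2 * real N)"
    by (rule LIMSEQ_le_const2) (use stirling_rem_diff_le assms in blast)
  then show ?thesis by (simp add: stirling_rem_def)
qed

lemma scaled_ln_one_plus_expansion:
  fixes n X w :: real
  assumes n: "n > 0" and X: "X \<ge> n / 16" and w: "\<bar>w\<bar> \<le> n / 100"
  defines "s \<equiv> w / (2 * X)"
  shows "\<bar>(X * (1 + s) + 1/2) * ln (1 + s) - (X * s + X * s\<^sup>2 / 2 - X * s ^ 3 / 6 + s / 2)\<bar>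
    \<le> 43 * (w ^ 4 / n ^ 3) + 64 * (w\<^sup>2 / n\<^sup>2)"
proof -
  define h where "h = (1 + s) * ln (1 + s) - s - s\<^sup>2 / 2 + s ^ 3 / 6"
  have X_pos: "X > 0" using n X by linarith
  have "\<bar>s\<bar> = \<bar>w\<bar> / (2 * X)" using X_pos by (simp add: s_def)
  also have "\<dots> \<le> (n / 100) / (2 * (n / 16))"
    using X_pos w X n by (intro frac_le) auto
  finally have s: "\<bar>s\<bar> \<le> 1/2" using n by simp
  have "(X * (1 + s) + 1/2) * ln (1 + s) - (X * s + X * s\<^sup>2 / 2 - X * s ^ 3 / 6 + s / 2)
      = X * h + (ln (1 + s) - s) / 2"
    by (simp add: h_def field_simps)
  moreover have "\<bar>X * h\<bar> \<le> 43 * (w ^ 4 / n ^ 3)"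
  proof -
    have "\<bar>X * h\<bar> \<le> X * (s ^ 4 / 6)"
      using one_plus_x_ln_one_plus_x_taylor_bounds[OF s] X_pos
      by (simp add: h_def abs_mult mult_left_mono)
    also have "\<dots> = w ^ 4 / (96 * X ^ 3)"
      using X_pos by (simp add: s_def field_simps power_def)
    also have "\<dots> \<le> w ^ 4 / (96 * (n / 16) ^ 3)"
      using n X by (intro divide_left_mono mult_left_mono power_mono mult_pos_pos) auto
    also have "\<dots> \<le> 43 * (w ^ 4 / n ^ 3)"
      using n by (simp add: field_simps)
    finally show ?thesis .
  qed
  moreover have "\<bar>(ln (1 + s) - s) / 2\<bar> \<le> 64 * (w\<^sup>2 / n\<^sup>2)"
  proof -
    have "\<bar>(ln (1 + s) - s) / 2\<bar> \<le> s\<^sup>2"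
      using abs_ln_one_plus_x_minus_x_bound[OF s] by simp
    also have "\<dots> = w\<^sup>2 / (4 * X\<^sup>2)"
      by (simp add: s_def power_divide power_mult_distrib)
    also have "\<dots> \<le> w\<^sup>2 / (4 * (n / 16)\<^sup>2)"
      using n X by (intro divide_left_mono mult_left_mono power_mono mult_pos_pos) auto
    also have "\<dots> = 64 * (w\<^sup>2 / n\<^sup>2)"
      using n by (simp add: field_simps power2_eq_square)
    finally show ?thesis .
  qed
  ultimately show ?thesis
    using abs_triangle_ineq[of "X * h" "(ln (1 + s) - s) / 2"] by linarith
qed

(* The third-order Taylor polynomial of stirling_main at X, evaluated at X + v / 2. *)
definition stirling_taylor :: "real \<Rightarrow> real \<Rightarrow> real" where
  "stirling_taylor X v = stirling_main X + v / 2 * ln X + v / 4 * (1 / X) + v\<^sup>2 / 8 * (1 / X)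
    - v ^ 3 / 48 * (1 / X)\<^sup>2"

lemma stirling_main_taylor:
  fixes n X w :: real
  assumes n: "n > 0" and X: "X \<ge> n / 16" and w: "\<bar>w\<bar> \<le> n / 100"
  shows "\<bar>stirling_main (X + w / 2) - stirling_taylor X w\<bar> \<le> 43 * (w ^ 4 / n ^ 3) + 64 * (w\<^sup>2 / n\<^sup>2)"
proof -
  define s where "s = w / (2 * X)"
  have X_pos: "X > 0" using n X by linarith
  have "\<bar>w\<bar> < 2 * X" using n X w by linarith
  then have "1 + s > 0"
    using X_pos by (simp add: s_def abs_less_iff field_simps)
  moreover have "X + w / 2 = X * (1 + s)"
    using X_pos by (simp add: s_def field_simps)
  ultimately have "ln (X + w / 2) = ln X + ln (1 + s)"
    using X_pos by (simp add: ln_mult)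
  then have "stirling_main (X + w / 2) - stirling_taylor X w
    = (X * (1 + s) + 1/2) * ln (1 + s) - (X * s + X * s\<^sup>2 / 2 - X * s ^ 3 / 6 + s / 2)"
    using X_pos
    by (simp add: stirling_main_def stirling_taylor_def s_def field_simps power2_eq_square power3_eq_cube)
  then show ?thesis
    using scaled_ln_one_plus_expansion[OF n X w] by (simp add: s_def)
qed

lemma stirling_main_prefactor:
  fixes m k P Q n :: real
  assumes pos: "m > 0" "k > 0" "P > 0" "Q > 0" and n: "m + k = n" "P + Q = n"
  shows "stirling_main m + stirling_main k - stirling_main n + stirling_main P + stirling_main Q
      - (stirling_main (m * P / n) + stirling_main (m * Q / n)
         + stirling_main (k * P / n) + stirling_main (k * Q / n))
    = ln (2 * sqrt (1 / (2 * pi * (4 * m * k * P * Q / n ^ 3)))) + ln (2 * pi) / 2"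
proof -
  have n_pos: "n > 0" using pos n by linarith
  have ln_cell: "ln (r * c / n) = ln r + ln c - ln n" if "r > 0" "c > 0" for r c
    using that n_pos by (simp add: ln_mult ln_div)
  have "ln (8::real) = 3 * ln 2"
    using ln_realpow[of 2 3] by simp
  then have "ln (2 * sqrt (1 / (2 * pi * (4 * m * k * P * Q / n ^ 3))))
      = (3 * ln n - ln m - ln k - ln P - ln Q) / 2 - ln (2 * pi) / 2"
    using pos n_pos by (simp add: ln_mult ln_div ln_sqrt ln_realpow ln_inverse field_simps)
  moreover have "stirling_main (m * P / n) + stirling_main (m * Q / n)
      + stirling_main (k * P / n) + stirling_main (k * Q / n)
    = (m + 1) * ln m + (k + 1) * ln k + (P + 1) * ln P + (Q + 1) * ln Q - (n + 2) * ln n - n"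
  proof -
    have k: "k = n - m" and Q: "Q = n - P" using n by simp_all
    show ?thesis
      unfolding stirling_main_def ln_cell[OF pos(1,3)] ln_cell[OF pos(1,4)]
        ln_cell[OF pos(2,3)] ln_cell[OF pos(2,4)]
      using n_pos unfolding k Q by (simp add: field_simps)
  qed
  ultimately show ?thesis
    using n by (simp add: stirling_main_def algebra_simps)
qed

lemma mult_div_ge_quarter_sq:
  fixes r c n :: real
  assumes "n > 0" "r \<ge> n / 4" "c \<ge> n / 4"
  shows "r * c / n \<ge> n / 16"
proof -
  have "(n / 4) * (n / 4) \<le> r * c" using assms by (intro mult_mono) auto
  then show ?thesis using assms by (simp add: field_simps)
qed

lemma cells_inverse_sums:
  fixes m k P Q n :: real
  assumes pos: "m > 0" "k > 0" "P > 0" "Q > 0" "n > 0"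
  shows "1 / (m * P / n) + 1 / (m * Q / n) + 1 / (k * P / n) + 1 / (k * Q / n)
      = n * (m + k) * (P + Q) / (m * k * P * Q)"
    and "1 / (m * P / n) - 1 / (m * Q / n) - 1 / (k * P / n) + 1 / (k * Q / n)
      = n * (1 / m - 1 / k) * (1 / P - 1 / Q)"
    and "1 / (m * P / n)\<^sup>2 - 1 / (m * Q / n)\<^sup>2 - 1 / (k * P / n)\<^sup>2 + 1 / (k * Q / n)\<^sup>2
      = n\<^sup>2 * (1 / m\<^sup>2 - 1 / k\<^sup>2) * (1 / P\<^sup>2 - 1 / Q\<^sup>2)"
  using pos by (simp_all add: field_simps power2_eq_square)

lemma inverse_diff_bounds:
  fixes m k n d :: real
  assumes n: "n > 0" "m + k = n" and mk: "m \<ge> n / 4" "k \<ge> n / 4" "\<bar>m - k\<bar> \<le> d"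
  shows "\<bar>1 / m - 1 / k\<bar> \<le> 16 * d / n\<^sup>2"
    and "\<bar>1 / m\<^sup>2 - 1 / k\<^sup>2\<bar> \<le> 256 * d / n ^ 3"
proof -
  have pos: "m > 0" "k > 0" using n mk by linarith+
  have "1 / (m * k) \<le> 1 / (n / 4 * (n / 4))"
    using n mk by (intro divide_left_mono mult_mono mult_pos_pos) auto
  then have inv: "1 / (m * k) \<le> 16 / n\<^sup>2"
    by (simp add: power2_eq_square)
  have "\<bar>1 / m - 1 / k\<bar> = \<bar>m - k\<bar> * (1 / (m * k))"
    using pos by (simp add: field_simps abs_minus_commute)
  also have "\<dots> \<le> d * (16 / n\<^sup>2)"
    using inv mk(3) pos by (intro mult_mono) auto
  finally show "\<bar>1 / m - 1 / k\<bar> \<le> 16 * d / n\<^sup>2" by (simp add: mult.commute)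
  have "1 / m\<^sup>2 - 1 / k\<^sup>2 = (k - m) * n * (1 / (m * k))\<^sup>2"
    using pos unfolding n(2)[symmetric] by (simp add: field_simps power2_eq_square)
  then have "\<bar>1 / m\<^sup>2 - 1 / k\<^sup>2\<bar> = \<bar>m - k\<bar> * n * (1 / (m * k))\<^sup>2"
    using n by (simp add: abs_mult abs_minus_commute)
  also have "\<dots> \<le> d * n * (16 / n\<^sup>2)\<^sup>2"
    using inv pos n mk(3) by (intro mult_mono power_mono) auto
  also have "\<dots> = 256 * d / n ^ 3"
    using n by (simp add: field_simps power2_eq_square power3_eq_cube)
  finally show "\<bar>1 / m\<^sup>2 - 1 / k\<^sup>2\<bar> \<le> 256 * d / n ^ 3" .
qed

lemma power2_div_le:
  fixes w n :: real
  assumes "n > 0"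
  shows "w\<^sup>2 / n\<^sup>2 \<le> 1 / n + w ^ 4 / n ^ 3"
proof -
  have "2 * (n * w\<^sup>2) \<le> n\<^sup>2 + (w\<^sup>2)\<^sup>2"
    using sum_squares_bound[of n "w\<^sup>2"] by simp
  moreover have "(w\<^sup>2)\<^sup>2 = w ^ 4" "0 \<le> n * w\<^sup>2"
    using assms by (simp_all flip: power_mult)
  ultimately have "n * w\<^sup>2 \<le> n\<^sup>2 + w ^ 4"
    by linarith
  then have "n * w\<^sup>2 / n ^ 3 \<le> (n\<^sup>2 + w ^ 4) / n ^ 3"
    using assms by (intro divide_right_mono) auto
  then show ?thesis
    using assms by (simp add: field_simps power2_eq_square power3_eq_cube)
qed

lemma abs_power3_div_le:
  fixes w n :: real
  assumes "n \<ge> 1"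
  shows "\<bar>w\<bar> ^ 3 / n ^ 3 \<le> 1 / n + w ^ 4 / n ^ 3"
proof -
  have "\<bar>w\<bar> ^ 3 \<le> 1 + w ^ 4"
  proof (cases "\<bar>w\<bar> \<le> 1")
    case True
    then have "\<bar>w\<bar> ^ 3 \<le> 1" by (simp add: power_le_one)
    moreover have "0 \<le> w ^ 4" by simp
    ultimately show ?thesis by linarith
  next
    case False
    then have "\<bar>w\<bar> ^ 3 \<le> \<bar>w\<bar> ^ 4" by (intro power_increasing) auto
    then show ?thesis by simp
  qed
  then have "\<bar>w\<bar> ^ 3 / n ^ 3 \<le> 1 / n ^ 3 + w ^ 4 / n ^ 3"
    using assms by (simp add: divide_right_mono flip: add_divide_distrib)
  moreover have "1 / n ^ 3 \<le> 1 / n"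
    using assms power_increasing[of 1 3 n] by (intro divide_left_mono) auto
  ultimately show ?thesis by linarith
qed

(* Here |m - k| <= 1 gains a factor 1/n: it makes the cubic term of the expansion O(|w|^3/n^3)
   instead of O(|w|^3/n^2). *)
lemma cells_inverse_diff_bounds:
  fixes m k P Q n :: real
  assumes n: "n > 0" "m + k = n" "P + Q = n"
    and mk: "\<bar>m - k\<bar> \<le> 1" "m \<ge> n / 4" "k \<ge> n / 4" and PQ: "P \<ge> n / 4" "Q \<ge> n / 4"
  shows "\<bar>n\<^sup>2 * (1 / m\<^sup>2 - 1 / k\<^sup>2) * (1 / P\<^sup>2 - 1 / Q\<^sup>2)\<bar> \<le> 65536 / n ^ 3"
    and "\<bar>n * (1 / m - 1 / k) * (1 / P - 1 / Q)\<bar> \<le> 256 / n\<^sup>2"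
proof -
  have PQ_diff: "\<bar>P - Q\<bar> \<le> n" using n PQ by linarith
  have "\<bar>n\<^sup>2 * (1 / m\<^sup>2 - 1 / k\<^sup>2) * (1 / P\<^sup>2 - 1 / Q\<^sup>2)\<bar>
      = n\<^sup>2 * \<bar>1 / m\<^sup>2 - 1 / k\<^sup>2\<bar> * \<bar>1 / P\<^sup>2 - 1 / Q\<^sup>2\<bar>"
    by (simp add: abs_mult)
  also have "\<dots> \<le> n\<^sup>2 * (256 * 1 / n ^ 3) * (256 * n / n ^ 3)"
    using inverse_diff_bounds(2)[OF n(1,2) mk(2,3,1)] inverse_diff_bounds(2)[OF n(1,3) PQ PQ_diff] n
    by (intro mult_mono mult_left_mono) auto
  also have "\<dots> = 65536 / n ^ 3"
    using n by (simp add: field_simps power2_eq_square power3_eq_cube)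
  finally show "\<bar>n\<^sup>2 * (1 / m\<^sup>2 - 1 / k\<^sup>2) * (1 / P\<^sup>2 - 1 / Q\<^sup>2)\<bar> \<le> 65536 / n ^ 3" .
  have "\<bar>n * (1 / m - 1 / k) * (1 / P - 1 / Q)\<bar> = n * \<bar>1 / m - 1 / k\<bar> * \<bar>1 / P - 1 / Q\<bar>"
    using n by (simp add: abs_mult)
  also have "\<dots> \<le> n * (16 * 1 / n\<^sup>2) * (16 * n / n\<^sup>2)"
    using inverse_diff_bounds(1)[OF n(1,2) mk(2,3,1)] inverse_diff_bounds(1)[OF n(1,3) PQ PQ_diff] n
    by (intro mult_mono mult_left_mono) auto
  also have "\<dots> = 256 / n\<^sup>2"
    using n by (simp add: field_simps power2_eq_square)
  finally show "\<bar>n * (1 / m - 1 / k) * (1 / P - 1 / Q)\<bar> \<le> 256 / n\<^sup>2" .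
qed

(* X_ij = r_i c_j / n are the cells of the 2x2 table with row sums m, k and column sums P, Q under
   independence; the signs of the +-w/2 shifts keep the margins fixed. *)
lemma stirling_main_cells_identity:
  fixes m k P Q n w :: real
  assumes pos: "m > 0" "k > 0" "P > 0" "Q > 0" and n: "m + k = n" "P + Q = n"
  defines "X11 \<equiv> m * P / n" and "X12 \<equiv> m * Q / n" and "X21 \<equiv> k * P / n" and "X22 \<equiv> k * Q / n"
    and "\<sigma> \<equiv> 4 * m * k * P * Q / n ^ 3"
  shows "stirling_main m + stirling_main k - stirling_main n + stirling_main P + stirling_main Q
      - stirling_main (X11 + w / 2) - stirling_main (X12 + (- w) / 2)
      - stirling_main (X21 + (- w) / 2) - stirling_main (X22 + w / 2)
      - ln (2 * pi) / 2 - (ln (2 * sqrt (1 / (2 * pi * \<sigma>))) - w\<^sup>2 / (2 * \<sigma>))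
    = w ^ 3 / 48 * (n\<^sup>2 * (1 / m\<^sup>2 - 1 / k\<^sup>2) * (1 / P\<^sup>2 - 1 / Q\<^sup>2))
      - w / 4 * (n * (1 / m - 1 / k) * (1 / P - 1 / Q))
      - ((stirling_main (X11 + w / 2) - stirling_taylor X11 w)
        + (stirling_main (X12 + (- w) / 2) - stirling_taylor X12 (- w))
        + (stirling_main (X21 + (- w) / 2) - stirling_taylor X21 (- w))
        + (stirling_main (X22 + w / 2) - stirling_taylor X22 w))"
proof -
  have n_pos: "n > 0" using pos n by linarith
  have "stirling_taylor X11 w + stirling_taylor X12 (- w) + stirling_taylor X21 (- w) + stirling_taylor X22 w
    = stirling_main X11 + stirling_main X12 + stirling_main X21 + stirling_main X22
      + w / 2 * (ln X11 - ln X12 - ln X21 + ln X22)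
      + w / 4 * (1 / X11 - 1 / X12 - 1 / X21 + 1 / X22)
      + w\<^sup>2 / 8 * (1 / X11 + 1 / X12 + 1 / X21 + 1 / X22)
      - w ^ 3 / 48 * (1 / X11\<^sup>2 - 1 / X12\<^sup>2 - 1 / X21\<^sup>2 + 1 / X22\<^sup>2)"
    unfolding stirling_taylor_def power_one_over by algebra
  also have "ln X11 - ln X12 - ln X21 + ln X22 = 0"
    using pos n_pos by (simp add: X11_def X12_def X21_def X22_def ln_mult ln_div)
  also have "w\<^sup>2 / 8 * (1 / X11 + 1 / X12 + 1 / X21 + 1 / X22) = w\<^sup>2 / (2 * \<sigma>)"
    using cells_inverse_sums(1)[OF pos n_pos] pos n_pos unfolding n
    by (simp add: X11_def X12_def X21_def X22_def \<sigma>_def power3_eq_cube)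
  finally have "stirling_taylor X11 w + stirling_taylor X12 (- w) + stirling_taylor X21 (- w) + stirling_taylor X22 w
    = stirling_main X11 + stirling_main X12 + stirling_main X21 + stirling_main X22
      + w / 4 * (n * (1 / m - 1 / k) * (1 / P - 1 / Q)) + w\<^sup>2 / (2 * \<sigma>)
      - w ^ 3 / 48 * (n\<^sup>2 * (1 / m\<^sup>2 - 1 / k\<^sup>2) * (1 / P\<^sup>2 - 1 / Q\<^sup>2))"
    unfolding X11_def X12_def X21_def X22_def cells_inverse_sums(2,3)[OF pos n_pos] by simp
  moreover have "stirling_main m + stirling_main k - stirling_main n + stirling_main P + stirling_main Q
      - (stirling_main X11 + stirling_main X12 + stirling_main X21 + stirling_main X22)
    = ln (2 * sqrt (1 / (2 * pi * \<sigma>))) + ln (2 * pi) / 2"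
    unfolding X11_def X12_def X21_def X22_def \<sigma>_def by (rule stirling_main_prefactor[OF pos n])
  ultimately show ?thesis by linarith
qed

lemma stirling_main_hypergeometric:
  fixes m k P Q n w :: real
  assumes n: "n \<ge> 2" "m + k = n" "P + Q = n" and mk: "\<bar>m - k\<bar> \<le> 1"
    and PQ: "P \<ge> n / 4" "Q \<ge> n / 4" and w: "\<bar>w\<bar> \<le> n / 100"
  defines "\<sigma> \<equiv> 4 * m * k * P * Q / n ^ 3"
  shows "\<bar>stirling_main m + stirling_main k - stirling_main n + stirling_main P + stirling_main Q
      - stirling_main (m * P / n + w / 2) - stirling_main (m * Q / n - w / 2)
      - stirling_main (k * P / n - w / 2) - stirling_main (k * Q / n + w / 2)
      - ln (2 * pi) / 2 - (ln (2 * sqrt (1 / (2 * pi * \<sigma>))) - w\<^sup>2 / (2 * \<sigma>))\<bar>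
    \<le> 1800 * (1 / n + w ^ 4 / n ^ 3)"
proof -
  have n_pos: "n > 0" using n by simp
  have mk': "m \<ge> n / 4" "k \<ge> n / 4" using n mk by (auto simp: abs_le_iff)
  have pos: "m > 0" "k > 0" "P > 0" "Q > 0" using n_pos mk' PQ by linarith+
  have X: "m * P / n \<ge> n / 16" "m * Q / n \<ge> n / 16" "k * P / n \<ge> n / 16" "k * Q / n \<ge> n / 16"
    using mult_div_ge_quarter_sq n_pos mk' PQ by auto
  have "\<bar>- w\<bar> \<le> n / 100" using w by simp
  note taylor = stirling_main_taylor[OF n_pos X(1) w] stirling_main_taylor[OF n_pos X(2) this]
    stirling_main_taylor[OF n_pos X(3) this] stirling_main_taylor[OF n_pos X(4) w]
  have "x + (- w) / 2 = x - w / 2" "(- w) ^ 4 = w ^ 4" "(- w)\<^sup>2 = w\<^sup>2" for x by simp_all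
  note taylor = taylor[unfolded this]
    and identity = stirling_main_cells_identity[OF pos n(2,3), of w, folded \<sigma>_def, unfolded this]
  note inverse_bounds = cells_inverse_diff_bounds[OF n_pos n(2,3) mk mk' PQ]
  have "\<bar>w ^ 3 / 48 * (n\<^sup>2 * (1 / m\<^sup>2 - 1 / k\<^sup>2) * (1 / P\<^sup>2 - 1 / Q\<^sup>2))\<bar>
      = \<bar>w\<bar> ^ 3 / 48 * \<bar>n\<^sup>2 * (1 / m\<^sup>2 - 1 / k\<^sup>2) * (1 / P\<^sup>2 - 1 / Q\<^sup>2)\<bar>"
    by (simp add: abs_mult power_abs)
  also have "\<dots> \<le> \<bar>w\<bar> ^ 3 / 48 * (65536 / n ^ 3)"
    using inverse_bounds(1) by (intro mult_left_mono) auto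
  also have "\<dots> \<le> 1366 * (\<bar>w\<bar> ^ 3 / n ^ 3)"
    using n_pos by (simp add: field_simps)
  also have "\<dots> \<le> 1366 * (1 / n + w ^ 4 / n ^ 3)"
    using abs_power3_div_le[of n w] n by simp
  finally have cubic: "\<bar>w ^ 3 / 48 * (n\<^sup>2 * (1 / m\<^sup>2 - 1 / k\<^sup>2) * (1 / P\<^sup>2 - 1 / Q\<^sup>2))\<bar>
      \<le> 1366 * (1 / n + w ^ 4 / n ^ 3)" .
  have "\<bar>w / 4 * (n * (1 / m - 1 / k) * (1 / P - 1 / Q))\<bar>
      = \<bar>w\<bar> / 4 * \<bar>n * (1 / m - 1 / k) * (1 / P - 1 / Q)\<bar>"
    by (simp add: abs_mult)
  also have "\<dots> \<le> n / 100 / 4 * (256 / n\<^sup>2)"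
    using inverse_bounds(2) w by (intro mult_mono) auto
  also have "\<dots> \<le> 1 / n"
    using n_pos by (simp add: field_simps power2_eq_square)
  finally have linear: "\<bar>w / 4 * (n * (1 / m - 1 / k) * (1 / P - 1 / Q))\<bar> \<le> 1 / n" .
  have "w\<^sup>2 / n\<^sup>2 \<le> 1 / n + w ^ 4 / n ^ 3" "0 \<le> w ^ 4 / n ^ 3"
    using power2_div_le[OF n_pos] n_pos by simp_all
  then show ?thesis
    using taylor cubic linear unfolding identity abs_le_iff distrib_left by (intro conjI) linarith+
qed

definition sign_lists :: "nat \<Rightarrow> int list set" where
  "sign_lists N = {xs. length xs = N \<and> set xs \<subseteq> {-1, 1}}"

definition walks_to :: "nat \<Rightarrow> int \<Rightarrow> int list set" where
  "walks_to N s = {xs \<in> sign_lists N. sum_list xs = s}"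

lemma finite_sign_lists: "finite (sign_lists N)"
  using finite_lists_length_eq[of "{-1, 1 :: int}" N] by (simp add: sign_lists_def conj_commute)

lemma card_sign_lists: "card (sign_lists N) = 2 ^ N"
  using card_lists_length_eq[of "{-1, 1 :: int}" N]
  by (simp add: sign_lists_def conj_commute numeral_2_eq_2)

lemma finite_walks_to: "finite (walks_to N s)"
  unfolding walks_to_def using finite_sign_lists by simp

lemma walks_to_Suc:
  "walks_to (Suc N) s = (\<lambda>xs. 1 # xs) ` walks_to N (s - 1) \<union> (\<lambda>xs. -1 # xs) ` walks_to N (s + 1)"
proof (intro equalityI subsetI)
  fix xs assume "xs \<in> walks_to (Suc N) s"
  then obtain y ys where "xs = y # ys" "y \<in> {-1, 1}" "ys \<in> sign_lists N" "y + sum_list ys = s"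
    unfolding walks_to_def sign_lists_def by (cases xs) auto
  then show "xs \<in> (\<lambda>xs. 1 # xs) ` walks_to N (s - 1) \<union> (\<lambda>xs. -1 # xs) ` walks_to N (s + 1)"
    unfolding walks_to_def by auto
qed (auto simp: walks_to_def sign_lists_def)

lemma card_walks_to_Suc:
  "card (walks_to (Suc N) s) = card (walks_to N (s - 1)) + card (walks_to N (s + 1))"
  unfolding walks_to_Suc
  by (subst card_Un_disjoint) (auto simp: finite_walks_to card_image inj_on_def)

lemma card_walks_to:
  "card (walks_to N (2 * j - int N)) = (if 0 \<le> j then N choose nat j else 0)"
proof (induction N arbitrary: j)
  case 0
  have "walks_to 0 s = (if s = 0 then {[]} else {})" for s
    by (auto simp: walks_to_def sign_lists_def)
  then show ?case by auto
next
  case (Suc N)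
  have "2 * j - int (Suc N) - 1 = 2 * (j - 1) - int N" "2 * j - int (Suc N) + 1 = 2 * j - int N"
    by simp_all
  then have "card (walks_to (Suc N) (2 * j - int (Suc N)))
      = card (walks_to N (2 * (j - 1) - int N)) + card (walks_to N (2 * j - int N))"
    by (simp only: card_walks_to_Suc)
  also have "\<dots> = (if 0 \<le> j - 1 then N choose nat (j - 1) else 0) + (if 0 \<le> j then N choose nat j else 0)"
    by (simp only: Suc.IH)
  also have "\<dots> = (if 0 \<le> j then Suc N choose nat j else 0)"
  proof (cases "j \<ge> 1")
    case True
    then have "nat j = Suc (nat (j - 1))" by simp
    then show ?thesis using True by simp
  next
    case False
    then show ?thesis by (cases "j = 0") auto
  qed
  finally show ?case .
qed

lemma sum_list_sign_lists:
  "xs \<in> sign_lists N \<Longrightarrow> \<exists>j\<le>N. sum_list xs = 2 * int j - int N"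
proof (induction xs arbitrary: N)
  case Nil
  then show ?case by (simp add: sign_lists_def)
next
  case (Cons y ys)
  then obtain M where M: "N = Suc M" "ys \<in> sign_lists M" "y \<in> {-1, 1}"
    by (cases N) (auto simp: sign_lists_def)
  then obtain j where "j \<le> M" "sum_list ys = 2 * int j - int M"
    using Cons.IH by blast
  then show ?case
    using M by (intro exI[of _ "if y = 1 then Suc j else j"]) auto
qed

lemma card_walks_prefix:
  assumes "m \<le> n"
  shows "card {xs \<in> sign_lists n. sum_list (take m xs) = k \<and> sum_list xs = z}
    = card (walks_to m k) * card (walks_to (n - m) (z - k))"
proof -
  have "bij_betw (\<lambda>xs. (take m xs, drop m xs))
      {xs \<in> sign_lists n. sum_list (take m xs) = k \<and> sum_list xs = z}
      (walks_to m k \<times> walks_to (n - m) (z - k))"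
  proof (rule bij_betwI[where g = "\<lambda>(u, v). u @ v"])
    show "(\<lambda>xs. (take m xs, drop m xs))
        \<in> {xs \<in> sign_lists n. sum_list (take m xs) = k \<and> sum_list xs = z}
          \<rightarrow> walks_to m k \<times> walks_to (n - m) (z - k)"
    proof
      fix xs assume xs: "xs \<in> {xs \<in> sign_lists n. sum_list (take m xs) = k \<and> sum_list xs = z}"
      then have "sum_list (take m xs) + sum_list (drop m xs) = z"
        by (metis (mono_tags, lifting) append_take_drop_id mem_Collect_eq sum_list_append)
      then show "(take m xs, drop m xs) \<in> walks_to m k \<times> walks_to (n - m) (z - k)"
        using xs assms unfolding walks_to_def sign_lists_def
        by (auto dest: in_set_takeD in_set_dropD)
    qed
  qed (use assms in \<open>auto simp: walks_to_def sign_lists_def\<close>)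
  then show ?thesis
    by (simp add: bij_betw_same_card card_cartesian_product)
qed

lemma prob_srw_steps:
  "measure_pmf.prob (srw_steps N) A = card (sign_lists N \<inter> A) / 2 ^ N"
proof -
  have "sign_lists N \<noteq> {}"
    using card_sign_lists[of N] by auto
  then show ?thesis
    using measure_pmf_of_set[OF _ finite_sign_lists] card_sign_lists
    by (simp add: srw_steps_def flip: sign_lists_def)
qed

lemma walk_pos_sign_lists: "xs \<in> sign_lists n \<Longrightarrow> walk_pos n xs = sum_list xs"
  by (simp add: walk_pos_def sign_lists_def)

lemma mem_L_imp_up_steps: "z \<in> L n \<Longrightarrow> \<exists>K\<le>n. z = 2 * int K - int n"
proof -
  assume "z \<in> L n"
  then have "measure_pmf.prob (srw_steps n) {xs. walk_pos n xs = z} \<noteq> 0"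
    by (simp add: L_def srw_prob_def)
  then have "sign_lists n \<inter> {xs. walk_pos n xs = z} \<noteq> {}"
    by (auto simp: prob_srw_steps)
  then obtain xs where "xs \<in> sign_lists n" "walk_pos n xs = z"
    by blast
  then show ?thesis
    using sum_list_sign_lists walk_pos_sign_lists by metis
qed

lemma srw_cond_prob_binomial:
  assumes "m \<le> n" "a \<le> m" "a \<le> K" "K \<le> n"
  shows "srw_cond_prob m (real_of_int (2 * int a - int m)) n (2 * int K - int n)
    = real (m choose a) * real ((n - m) choose (K - a)) / real (n choose K)"
proof -
  have "sign_lists n \<inter> {xs. real_of_int (walk_pos m xs) = real_of_int (2 * int a - int m)
        \<and> walk_pos n xs = 2 * int K - int n}
      = {xs \<in> sign_lists n. sum_list (take m xs) = 2 * int a - int m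
        \<and> sum_list xs = 2 * int K - int n}"
    using walk_pos_sign_lists by (auto simp: walk_pos_def)
  moreover have "sign_lists n \<inter> {xs. walk_pos n xs = 2 * int K - int n} = walks_to n (2 * int K - int n)"
    using walk_pos_sign_lists by (auto simp: walks_to_def)
  moreover have "2 * int K - int n - (2 * int a - int m) = 2 * int (K - a) - int (n - m)"
    using assms by simp
  then have "card (walks_to (n - m) (2 * int K - int n - (2 * int a - int m))) = (n - m) choose (K - a)"
    by (simp only: card_walks_to) simp
  ultimately show ?thesis
    using assms by (simp add: srw_cond_prob_def prob_srw_steps card_walks_prefix card_walks_to)
qed

lemma ln_binomial_stirling:
  assumes "1 \<le> j" "j < N"
  shows "\<bar>ln (real (N choose j))
      - (stirling_main (real N) - stirling_main (real j) - stirling_main (real (N - j)) - ln (2 * pi) / 2)\<bar>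
    \<le> 1 / (2 * real N) + 1 / (2 * real j) + 1 / (2 * real (N - j))"
proof -
  have "real (N choose j) = fact N / (fact j * fact (N - j))"
    using binomial_fact[of j N] assms by simp
  then have "ln (real (N choose j)) = ln (fact N) - ln (fact j) - ln (fact (N - j))"
    by (simp add: ln_div ln_mult)
  then show ?thesis
    using ln_fact_stirling[of N] ln_fact_stirling[of j] ln_fact_stirling[of "N - j"] assms
    by (simp add: abs_le_iff) linarith
qed

lemma ln_binomial_stirling_uniform:
  fixes x :: real
  assumes x: "x > 0" and j: "j \<le> N" "real j \<ge> x / 32" "real (N - j) \<ge> x / 32"
  shows "\<bar>ln (real (N choose j))
      - (stirling_main (real N) - stirling_main (real j) - stirling_main (real (N - j)) - ln (2 * pi) / 2)\<bar>
    \<le> 48 / x"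
proof -
  have inv: "1 / (2 * real i) \<le> 16 / x" if "real i \<ge> x / 32" for i
    using that x by (simp add: field_simps)
  have "real j > 0" "real (N - j) > 0" using x j by linarith+
  then have "1 \<le> j" "j < N" by auto
  moreover have "real N \<ge> x / 32" using j by simp
  ultimately show ?thesis
    using ln_binomial_stirling[of j N] inv[of N] inv[OF j(2)] inv[OF j(3)] by linarith
qed

lemma hypergeometric_cells_ge:
  fixes n m K a :: nat and w :: real
  assumes n: "n \<ge> 2" and m: "\<bar>real n - 2 * real m\<bar> \<le> 1"
    and K: "real K \<ge> n / 4" "real n - real K \<ge> n / 4" and w: "\<bar>w\<bar> \<le> n / 100"
    and a: "real a = real m * real K / real n + w / 2"
  shows "real a \<ge> n / 32" "real m - real a \<ge> n / 32" "real K - real a \<ge> n / 32"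
    "real n - real m - (real K - real a) \<ge> n / 32"
proof -
  have n_pos: "real n > 0" using n by simp
  have m': "real m \<ge> n / 4" "real n - real m \<ge> n / 4" using n m by (auto simp: abs_le_iff)
  have X: "real m * real K / n \<ge> n / 16" "real m * (real n - real K) / n \<ge> n / 16"
    "(real n - real m) * real K / n \<ge> n / 16" "(real n - real m) * (real n - real K) / n \<ge> n / 16"
    using mult_div_ge_quarter_sq[OF n_pos] m' K by auto
  have e: "real m - real a = real m * (real n - real K) / n - w / 2"
    "real K - real a = (real n - real m) * real K / n - w / 2"
    "real n - real m - (real K - real a) = (real n - real m) * (real n - real K) / n + w / 2"
    using a n_pos by (simp_all add: field_simps)
  have w2: "- (n / 200) \<le> w / 2" "w / 2 \<le> n / 200"
    using w by (auto simp: abs_le_iff)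
  show "real a \<ge> n / 32" using X(1) a w2 by linarith
  show "real m - real a \<ge> n / 32" using X(2) e(1) w2 by linarith
  show "real K - real a \<ge> n / 32" using X(3) e(2) w2 by linarith
  show "real n - real m - (real K - real a) \<ge> n / 32" using X(4) e(3) w2 by linarith
qed

lemma stirling_main_hypergeometric_nat:
  fixes n m K a :: nat and w :: real
  assumes n: "n \<ge> 2" and m: "\<bar>real n - 2 * real m\<bar> \<le> 1"
    and K: "real K \<ge> n / 4" "real n - real K \<ge> n / 4" and w: "\<bar>w\<bar> \<le> n / 100"
    and a: "real a = real m * real K / real n + w / 2" and cells: "a \<le> m" "K - a \<le> n - m" "a \<le> K"
  defines "\<sigma> \<equiv> 4 * real m * (real n - real m) * real K * (real n - real K) / real n ^ 3"
  shows "\<bar>stirling_main m + stirling_main (real (n - m)) - stirling_main n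
      + stirling_main K + stirling_main (real (n - K)) - stirling_main a - stirling_main (real (m - a))
      - stirling_main (real (K - a)) - stirling_main (real (n - m - (K - a)))
      - ln (2 * pi) / 2 - (ln (2 * sqrt (1 / (2 * pi * \<sigma>))) - w\<^sup>2 / (2 * \<sigma>))\<bar>
    \<le> 1800 * (1 / n + w ^ 4 / real n ^ 3)"
proof -
  have n_pos: "real n > 0" using n by simp
  have "real n \<ge> 2" using n by simp
  then have "real K \<le> real n" "real m \<le> real n"
    using K abs_le_D1[OF m] abs_le_D2[OF m] by linarith+
  then have casts: "real (n - m) = real n - real m" "real (K - a) = real K - real a"
    "real (m - a) = real m - real a" "real (n - m - (K - a)) = real n - real m - (real K - real a)"
    "real (n - K) = real n - real K"
    using cells by simp_all
  have "real m * real K / real n + w / 2 = real a"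
    "real m * (real n - real K) / real n - w / 2 = real m - real a"
    "(real n - real m) * real K / real n - w / 2 = real K - real a"
    "(real n - real m) * (real n - real K) / real n + w / 2 = real n - real m - (real K - real a)"
    using a n_pos by (simp_all add: field_simps)
  moreover have "\<bar>stirling_main m + stirling_main (real n - real m) - stirling_main n
      + stirling_main K + stirling_main (real n - real K)
      - stirling_main (real m * real K / real n + w / 2)
      - stirling_main (real m * (real n - real K) / real n - w / 2)
      - stirling_main ((real n - real m) * real K / real n - w / 2)
      - stirling_main ((real n - real m) * (real n - real K) / real n + w / 2)
      - ln (2 * pi) / 2 - (ln (2 * sqrt (1 / (2 * pi * \<sigma>))) - w\<^sup>2 / (2 * \<sigma>))\<bar>
    \<le> 1800 * (1 / n + w ^ 4 / real n ^ 3)"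
    unfolding \<sigma>_def by (rule stirling_main_hypergeometric) (use n m K w in auto)
  ultimately show ?thesis
    unfolding casts by (simp only:)
qed

lemma ln_hypergeometric_stirling:
  fixes n m K a :: nat and w :: real
  assumes n: "n \<ge> 2" and m: "\<bar>real n - 2 * real m\<bar> \<le> 1"
    and K: "real K \<ge> n / 4" "real n - real K \<ge> n / 4" and w: "\<bar>w\<bar> \<le> n / 100"
    and a: "real a = real m * real K / real n + w / 2"
  defines "\<sigma> \<equiv> 4 * real m * (real n - real m) * real K * (real n - real K) / real n ^ 3"
  shows "\<bar>ln (real (m choose a) * real ((n - m) choose (K - a)) / real (n choose K))
      - (ln (2 * sqrt (1 / (2 * pi * \<sigma>))) - w\<^sup>2 / (2 * \<sigma>))\<bar>
    \<le> 2000 * (1 / n + w ^ 4 / real n ^ 3)"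
proof -
  have n_pos: "real n > 0" using n by simp
  note cells = hypergeometric_cells_ge[OF n m K w a]
  have nat_cells: "a \<le> m" "K - a \<le> n - m" "a \<le> K" "K \<le> n"
    using cells n_pos by linarith+
  have ge: "real a \<ge> n / 32" "real (m - a) \<ge> n / 32" "real (K - a) \<ge> n / 32"
    "real (n - m - (K - a)) \<ge> n / 32" "real K \<ge> n / 32" "real (n - K) \<ge> n / 32"
    using cells n_pos K nat_cells by simp_all
  have "\<bar>ln (real (m choose a)) - (stirling_main m - stirling_main a
      - stirling_main (real (m - a)) - ln (2 * pi) / 2)\<bar> \<le> 48 / n"
    by (rule ln_binomial_stirling_uniform[OF n_pos nat_cells(1) ge(1,2)])
  moreover have "\<bar>ln (real ((n - m) choose (K - a))) - (stirling_main (real (n - m))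
      - stirling_main (real (K - a)) - stirling_main (real (n - m - (K - a))) - ln (2 * pi) / 2)\<bar>
    \<le> 48 / n"
    by (rule ln_binomial_stirling_uniform[OF n_pos nat_cells(2) ge(3,4)])
  moreover have "\<bar>ln (real (n choose K)) - (stirling_main n - stirling_main K
      - stirling_main (real (n - K)) - ln (2 * pi) / 2)\<bar> \<le> 48 / n"
    by (rule ln_binomial_stirling_uniform[OF n_pos nat_cells(4) ge(5,6)])
  moreover have "ln (real (m choose a) * real ((n - m) choose (K - a)) / real (n choose K))
      = ln (real (m choose a)) + ln (real ((n - m) choose (K - a))) - ln (real (n choose K))"
    using nat_cells by (simp add: ln_mult ln_div)
  moreover have "48 / real n = 48 * (1 / n)" "0 \<le> 1 / real n" "0 \<le> w ^ 4 / real n ^ 3"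
    by simp_all
  moreover note stirling_main_hypergeometric_nat[OF n m K w a nat_cells(1-3), folded \<sigma>_def]
  ultimately show ?thesis
    unfolding abs_le_iff distrib_left by (intro conjI) linarith+
qed

lemma srw_cond_prob_gaussian:
  fixes n m :: nat and z k :: int and w :: real
  assumes n: "n \<ge> 2" and m: "\<bar>2 * int m - int n\<bar> \<le> 1"
    and z: "\<bar>real_of_int z\<bar> \<le> 1/100 * real n" and w: "\<bar>w\<bar> \<le> 1/100 * real n"
    and zL: "z \<in> L n" and kL: "k \<in> L m" and k: "real_of_int k = w + real m / real n * real_of_int z"
  defines "\<sigma> \<equiv> (real m - real m ^ 2 / real n) * (1 - (real_of_int z / real n) ^ 2)"
  shows "\<exists>E. \<bar>E\<bar> \<le> 2000 * (1 / real n + w ^ 4 / real n ^ 3) \<and>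
    srw_cond_prob m (real m / real n * real_of_int z + w) n z
      = 2 * sqrt (1 / (2 * pi * \<sigma>)) * exp (- (w ^ 2) / (2 * \<sigma>) + E)"
proof -
  obtain K where K: "K \<le> n" "z = 2 * int K - int n" using mem_L_imp_up_steps[OF zL] by blast
  obtain a where a: "a \<le> m" "k = 2 * int a - int m" using mem_L_imp_up_steps[OF kL] by blast
  have n_pos: "real n > 0" using n by simp
  have m': "\<bar>real n - 2 * real m\<bar> \<le> 1"
    using m by (simp add: abs_le_iff)
  have z': "real_of_int z = 2 * real K - real n" using K by simp
  have Kz: "\<bar>2 * real K - real n\<bar> \<le> n / 100" using z unfolding z' by simp
  have K': "real K \<ge> n / 4" "real n - real K \<ge> n / 4"
    using abs_le_D1[OF Kz] abs_le_D2[OF Kz] n_pos by linarith+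
  have w': "\<bar>w\<bar> \<le> n / 100" using w by simp
  have a': "real a = real m * real K / real n + w / 2"
    using k n_pos unfolding a(2) z' by (simp add: field_simps)
  note cells = hypergeometric_cells_ge[OF n m' K' w' a']
  have "a \<le> K" "m \<le> n"
    using cells n_pos by linarith+
  then have p: "srw_cond_prob m (real m / real n * real_of_int z + w) n z
      = real (m choose a) * real ((n - m) choose (K - a)) / real (n choose K)"
    using srw_cond_prob_binomial[of m n a K] K a k by (simp add: add.commute)
  have \<sigma>_eq: "\<sigma> = 4 * real m * (real n - real m) * real K * (real n - real K) / real n ^ 3"
    using n_pos unfolding \<sigma>_def z' by (simp add: field_simps power2_eq_square power3_eq_cube)
  note estimate = ln_hypergeometric_stirling[OF n m' K' w' a', folded this]
  have "real m > 0" "real n - real m > 0" "real K > 0" "real n - real K > 0"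
    using cells K' n_pos by linarith+
  then have \<sigma>_pos: "\<sigma> > 0"
    and p_pos: "real (m choose a) * real ((n - m) choose (K - a)) / real (n choose K) > 0"
    using \<open>a \<le> K\<close> \<open>m \<le> n\<close> cells unfolding \<sigma>_eq by (simp_all add: K(1) a(1))
  define E where "E = ln (srw_cond_prob m (real m / real n * real_of_int z + w) n z)
    - (ln (2 * sqrt (1 / (2 * pi * \<sigma>))) - w\<^sup>2 / (2 * \<sigma>))"
  have "\<bar>E\<bar> \<le> 2000 * (1 / real n + w ^ 4 / real n ^ 3)"
    unfolding E_def p by (rule estimate)
  moreover have "srw_cond_prob m (real m / real n * real_of_int z + w) n z
      = 2 * sqrt (1 / (2 * pi * \<sigma>)) * exp (- (w ^ 2) / (2 * \<sigma>) + E)"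
    using \<sigma>_pos p_pos unfolding E_def p by (simp add: exp_diff)
  ultimately show ?thesis by blast
qed

theorem lemma7:
  shows "\<exists>c::real. c > 0 \<and> (\<exists>C::real. \<forall>(n::nat) (m::nat) (z::int) (w::real).
     n \<ge> 2 \<longrightarrow> \<bar>2 * int m - int n\<bar> \<le> 1 \<longrightarrow>
     \<bar>real_of_int z\<bar> \<le> c * real n \<longrightarrow> \<bar>w\<bar> \<le> c * real n \<longrightarrow>
     z \<in> L n \<longrightarrow>
     (\<exists>k::int. real_of_int k = w + real m / real n * real_of_int z \<and> k \<in> L m) \<longrightarrow>
     (let \<sigma> = (real m - real m ^ 2 / real n) * (1 - (real_of_int z / real n) ^ 2) in
      \<exists>E::real. \<bar>E\<bar> \<le> C * (1 / real n + w ^ 4 / real n ^ 3) \<and>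
        srw_cond_prob m (real m / real n * real_of_int z + w) n z
          = 2 * sqrt (1 / (2 * pi * \<sigma>)) * exp (- (w ^ 2) / (2 * \<sigma>) + E)))"
proof (rule exI[of _ "1/100"], intro conjI exI[of _ 2000] allI impI, goal_cases)
  case (2 n m z w)
  then obtain k where "k \<in> L m" "real_of_int k = w + real m / real n * real_of_int z"
    by blast
  with 2 show ?case
    unfolding Let_def by (intro srw_cond_prob_gaussian) auto
qed simp

end
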